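(* Let $\lambda\in\mathbb{R}$ and define, for $x>0$, $$f_\lambda(x)=[\psi'(x)]^2+\psi''(x)-\frac{x^2+\lambda x+12}{12x^4(x+1)^2}.$$ Then $-f_\lambda$ is completely monotonic on $(0,\infty)$ if and only if $\lambda\ge 4$.
   Context: $\Gamma$ is Euler's gamma function, $\psi=\Gamma'/\Gamma$ is the digamma function, and $\psi',\psi''$ are its first and second derivatives. A function $f$ is completely monotonic on an interval $I$ if $f$ has derivatives of all orders on $I$ and $0\le(-1)^n f^{(n)}(x)<\infty$ for all $x\in I$ and all integers $n\ge0$. *)

theory Defs
  imports "HOL-Analysis.Analysis"
begin

definition completely_monotonic_on :: "real set \<Rightarrow> (real \<Rightarrow> real) \<Rightarrow> bool" where
  "completely_monotonic_on I f \<longleftrightarrow>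
     (\<forall>n. \<forall>x\<in>I. ((deriv ^^ n) f has_real_derivative (deriv ^^ Suc n) f x) (at x)) \<and>
     (\<forall>n. \<forall>x\<in>I. (-1) ^ n * (deriv ^^ n) f x \<ge> 0)"

definition f_lam :: "real \<Rightarrow> real \<Rightarrow> real" where
  "f_lam lam x = (Polygamma 1 x)\<^sup>2 + Polygamma 2 x
      - (x\<^sup>2 + lam * x + 12) / (12 * x ^ 4 * (x + 1)\<^sup>2)"

end

theory Submission
  imports Defs
begin

text \<open>
  Write -f_lam lam x = F x + (lam - 4)/12 * x^(-3) (x+1)^(-2) with F = -f_lam 4.
  Completely monotonic functions on (0,\<infinity>) are closed under sums, products and nonnegative
  multiples and contain every (x+a)^(-m), so for lam \<ge> 4 it suffices that F is completely
  monotonic. This follows by telescoping twice: if all derivatives of G vanish at infinity and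
  G(x) - G(x+1) is completely monotonic, then so is G. Here F(x) - F(x+1) = 2 x^(-2) Q(x) with
  Q = P - \<psi>' for an explicit rational P, and Q(x) - Q(x+1) is a positive combination of
  products of reciprocals 1/(x+i).

  Conversely, comparing the same two recurrences with those of the reciprocal rising factorials
  1/(x)_5 and 1/(x)_6 gives F(x) = O(x^(-6)), while x^(-3) (x+1)^(-2) has exact order x^(-5);
  so for lam < 4 the function -f_lam lam is negative for large x.
\<close>

definition higher_derivs_on_pos :: "(real \<Rightarrow> real) \<Rightarrow> (nat \<Rightarrow> real \<Rightarrow> real) \<Rightarrow> bool" where
  "higher_derivs_on_pos f D \<longleftrightarrow>
     (\<forall>x>0. D 0 x = f x) \<and> (\<forall>n. \<forall>x>0. (D n has_real_derivative D (Suc n) x) (at x))"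

lemma higher_derivs_on_pos_cong:
  "higher_derivs_on_pos f D \<Longrightarrow> (\<And>x. x > 0 \<Longrightarrow> f x = g x) \<Longrightarrow> higher_derivs_on_pos g D"
  by (auto simp: higher_derivs_on_pos_def)

lemma higher_derivs_on_pos_deriv:
  assumes "higher_derivs_on_pos f D" "x > 0"
  shows "(deriv ^^ n) f x = D n x"
  using assms(2)
proof (induction n arbitrary: x)
  case 0
  then show ?case using assms(1) by (simp add: higher_derivs_on_pos_def)
next
  case (Suc n x)
  have "eventually (\<lambda>y. (deriv ^^ n) f y = D n y) (nhds x)"
    using eventually_nhds_in_open[of "{0<..}" x] Suc by (auto elim!: eventually_mono)
  then have "deriv ((deriv ^^ n) f) x = deriv (D n) x"
    by (rule deriv_cong_ev) simp
  also have "\<dots> = D (Suc n) x"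
    using assms(1) Suc.prems by (intro DERIV_imp_deriv) (auto simp: higher_derivs_on_pos_def)
  finally show ?case by simp
qed

lemma higher_derivs_on_pos_unique:
  assumes "higher_derivs_on_pos f D1" "higher_derivs_on_pos f D2" "x > 0"
  shows "D1 n x = D2 n x"
  using higher_derivs_on_pos_deriv[OF assms(1,3)] higher_derivs_on_pos_deriv[OF assms(2,3)] by simp

lemma higher_derivs_on_pos_add:
  "higher_derivs_on_pos f Df \<Longrightarrow> higher_derivs_on_pos g Dg \<Longrightarrow>
     higher_derivs_on_pos (\<lambda>x. f x + g x) (\<lambda>n x. Df n x + Dg n x)"
  unfolding higher_derivs_on_pos_def by (auto intro!: derivative_eq_intros)

lemma higher_derivs_on_pos_cmult:
  "higher_derivs_on_pos f Df \<Longrightarrow> higher_derivs_on_pos (\<lambda>x. c * f x) (\<lambda>n x. c * Df n x)"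
  unfolding higher_derivs_on_pos_def by (auto intro!: derivative_eq_intros)

lemma higher_derivs_on_pos_shift:
  "higher_derivs_on_pos f Df \<Longrightarrow> higher_derivs_on_pos (\<lambda>x. f (x + 1)) (\<lambda>n x. Df n (x + 1))"
  unfolding higher_derivs_on_pos_def by (auto simp: DERIV_shift[symmetric])

lemma higher_derivs_on_pos_mult:
  assumes "higher_derivs_on_pos f Df" "higher_derivs_on_pos g Dg"
  shows "higher_derivs_on_pos (\<lambda>x. f x * g x)
           (\<lambda>n x. \<Sum>i\<le>n. of_nat (n choose i) * Df i x * Dg (n - i) x)"
  unfolding higher_derivs_on_pos_def
proof (intro conjI allI impI)
  fix x :: real assume "x > 0"
  then show "(\<Sum>i\<le>0. of_nat (0 choose i) * Df i x * Dg (0 - i) x) = f x * g x"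
    using assms by (simp add: higher_derivs_on_pos_def)
next
  fix n and x :: real assume x: "x > 0"
  have Df: "(Df i has_real_derivative Df (Suc i) x) (at x)"
   and Dg: "(Dg i has_real_derivative Dg (Suc i) x) (at x)" for i
    using assms x by (auto simp: higher_derivs_on_pos_def)
  have "((\<lambda>x. \<Sum>i\<le>n. of_nat (n choose i) * Df i x * Dg (n - i) x) has_real_derivative
          (\<Sum>i\<le>n. of_nat (n choose i) * (Df (Suc i) x * Dg (n - i) x + Df i x * Dg (Suc (n - i)) x)))
          (at x)"
    by (auto intro!: derivative_eq_intros Df Dg simp: algebra_simps)
  also have "(\<Sum>i\<le>n. of_nat (n choose i) * (Df (Suc i) x * Dg (n - i) x + Df i x * Dg (Suc (n - i)) x))
      = (\<Sum>i\<le>Suc n. of_nat (Suc n choose i) * Df i x * Dg (Suc n - i) x)"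
  proof -
    have "(\<Sum>i\<le>n. of_nat (n choose i) * Df i x * Dg (Suc (n - i)) x)
        = (\<Sum>i\<le>Suc n. of_nat (n choose i) * Df i x * Dg (Suc n - i) x)"
      by (simp add: sum.atMost_Suc Suc_diff_le)
    also have "\<dots> = Df 0 x * Dg (Suc n) x
                     + (\<Sum>i\<le>n. of_nat (n choose Suc i) * Df (Suc i) x * Dg (n - i) x)"
      by (simp only: sum.atMost_Suc_shift) simp
    finally have second: "(\<Sum>i\<le>n. of_nat (n choose i) * Df i x * Dg (Suc (n - i)) x) = \<dots>" .
    have "(\<Sum>i\<le>Suc n. of_nat (Suc n choose i) * Df i x * Dg (Suc n - i) x)
        = Df 0 x * Dg (Suc n) x + (\<Sum>i\<le>n. of_nat (n choose i) * Df (Suc i) x * Dg (n - i) x)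
          + (\<Sum>i\<le>n. of_nat (n choose Suc i) * Df (Suc i) x * Dg (n - i) x)"
      by (simp only: sum.atMost_Suc_shift binomial_Suc_Suc) (simp add: sum.distrib algebra_simps)
    then show ?thesis
      using second by (simp add: sum.distrib algebra_simps)
  qed
  finally show "((\<lambda>x. \<Sum>i\<le>n. of_nat (n choose i) * Df i x * Dg (n - i) x) has_real_derivative
                  (\<Sum>i\<le>Suc n. of_nat (Suc n choose i) * Df i x * Dg (Suc n - i) x)) (at x)" .
qed

lemma higher_derivs_on_pos_inverse_power:
  assumes "a \<ge> 0"
  shows "higher_derivs_on_pos (\<lambda>x. 1 / (x + a) ^ m)
           (\<lambda>n x. (-1) ^ n * pochhammer (real m) n / (x + a) ^ (m + n))"
  unfolding higher_derivs_on_pos_def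
proof (intro conjI allI impI)
  fix n and x :: real assume "x > 0"
  then have "x + a \<noteq> 0" using assms by simp
  have "((\<lambda>x. 1 / (x + a) ^ k) has_real_derivative - real k / (x + a) ^ Suc k) (at x)" for k
  proof -
    have "((\<lambda>x. power_int (x + a) (- int k)) has_real_derivative
            of_int (- int k) * power_int (x + a) (- int k - 1) * 1) (at x)"
      using \<open>x + a \<noteq> 0\<close> by (intro derivative_eq_intros) auto
    then show ?thesis
      by (simp add: power_int_minus power_int_diff divide_inverse mult_ac)
  qed
  from DERIV_cmult[OF this, of "(-1) ^ n * pochhammer (real m) n" "m + n"]
  show "((\<lambda>x. (-1) ^ n * pochhammer (real m) n / (x + a) ^ (m + n)) has_real_derivative
              (-1) ^ Suc n * pochhammer (real m) (Suc n) / (x + a) ^ (m + Suc n)) (at x)"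
    by (simp add: pochhammer_rec' algebra_simps)
qed simp

lemma higher_derivs_on_pos_Polygamma: "higher_derivs_on_pos (Polygamma m) (\<lambda>n. Polygamma (m + n))"
  unfolding higher_derivs_on_pos_def
  by (auto intro!: has_field_derivative_Polygamma elim!: nonpos_Ints_cases)

lemma completely_monotonic_on_pos_iff:
  "completely_monotonic_on {0<..} f \<longleftrightarrow>
     (\<exists>D. higher_derivs_on_pos f D \<and> (\<forall>n x. x > 0 \<longrightarrow> 0 \<le> (-1) ^ n * D n x))"
proof
  assume "completely_monotonic_on {0<..} f"
  then show "\<exists>D. higher_derivs_on_pos f D \<and> (\<forall>n x. x > 0 \<longrightarrow> 0 \<le> (-1) ^ n * D n x)"
    by (intro exI[of _ "\<lambda>n. (deriv ^^ n) f"])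
       (auto simp: completely_monotonic_on_def higher_derivs_on_pos_def)
next
  assume "\<exists>D. higher_derivs_on_pos f D \<and> (\<forall>n x. x > 0 \<longrightarrow> 0 \<le> (-1) ^ n * D n x)"
  then obtain D where D: "higher_derivs_on_pos f D" and sign: "\<And>n x. x > 0 \<Longrightarrow> 0 \<le> (-1) ^ n * D n x"
    by blast
  have eq: "(deriv ^^ n) f x = D n x" if "x \<in> {0<..}" for n x
    using higher_derivs_on_pos_deriv[OF D] that by simp
  have "((deriv ^^ n) f has_real_derivative (deriv ^^ Suc n) f x) (at x)" if "x \<in> {0<..}" for n x
  proof (rule has_field_derivative_transform_within_open[where S = "{0<..}"])
    show "(D n has_real_derivative (deriv ^^ Suc n) f x) (at x)"
      unfolding eq[OF that] using D that by (simp add: higher_derivs_on_pos_def)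
  qed (use that eq in auto)
  moreover have "0 \<le> (-1) ^ n * (deriv ^^ n) f x" if "x \<in> {0<..}" for n x
    unfolding eq[OF that] using sign that by simp
  ultimately show "completely_monotonic_on {0<..} f"
    unfolding completely_monotonic_on_def by blast
qed

lemma completely_monotonic_on_nonneg:
  "completely_monotonic_on I f \<Longrightarrow> x \<in> I \<Longrightarrow> 0 \<le> f x"
  unfolding completely_monotonic_on_def by (metis funpow_0 mult_1 power_0)

lemma completely_monotonic_on_pos_cong:
  assumes "completely_monotonic_on {0<..} f" "\<And>x. x > 0 \<Longrightarrow> f x = g x"
  shows "completely_monotonic_on {0<..} g"
proof -
  obtain D where "higher_derivs_on_pos f D" "\<forall>n x. x > 0 \<longrightarrow> 0 \<le> (-1) ^ n * D n x"
    using assms(1) unfolding completely_monotonic_on_pos_iff by blast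
  moreover have "higher_derivs_on_pos g D"
    using higher_derivs_on_pos_cong[of f D g] assms(2) calculation(1) by blast
  ultimately show ?thesis
    unfolding completely_monotonic_on_pos_iff by blast
qed

lemma completely_monotonic_on_pos_add:
  assumes "completely_monotonic_on {0<..} f" "completely_monotonic_on {0<..} g"
  shows "completely_monotonic_on {0<..} (\<lambda>x. f x + g x)"
proof -
  obtain Df Dg where D: "higher_derivs_on_pos f Df" "higher_derivs_on_pos g Dg"
    and "\<forall>n x. x > 0 \<longrightarrow> 0 \<le> (-1) ^ n * Df n x" "\<forall>n x. x > 0 \<longrightarrow> 0 \<le> (-1) ^ n * Dg n x"
    using assms unfolding completely_monotonic_on_pos_iff by blast
  then show ?thesis
    unfolding completely_monotonic_on_pos_iff
    by (intro exI[of _ "\<lambda>n x. Df n x + Dg n x"] conjI higher_derivs_on_pos_add[OF D])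
      (simp add: distrib_left)
qed

lemma completely_monotonic_on_pos_cmult:
  assumes "c \<ge> 0" "completely_monotonic_on {0<..} f"
  shows "completely_monotonic_on {0<..} (\<lambda>x. c * f x)"
proof -
  obtain D where D: "higher_derivs_on_pos f D" and "\<forall>n x. x > 0 \<longrightarrow> 0 \<le> (-1) ^ n * D n x"
    using assms(2) unfolding completely_monotonic_on_pos_iff by blast
  then show ?thesis
    unfolding completely_monotonic_on_pos_iff using assms(1)
    by (intro exI[of _ "\<lambda>n x. c * D n x"] conjI higher_derivs_on_pos_cmult[OF D])
      (simp add: mult.left_commute)
qed

lemma completely_monotonic_on_pos_mult:
  assumes "completely_monotonic_on {0<..} f" "completely_monotonic_on {0<..} g"
  shows "completely_monotonic_on {0<..} (\<lambda>x. f x * g x)"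
proof -
  obtain Df Dg where D: "higher_derivs_on_pos f Df" "higher_derivs_on_pos g Dg"
    and sign: "\<And>n x. x > 0 \<Longrightarrow> 0 \<le> (-1) ^ n * Df n x" "\<And>n x. x > 0 \<Longrightarrow> 0 \<le> (-1) ^ n * Dg n x"
    using assms unfolding completely_monotonic_on_pos_iff by blast
  have "0 \<le> (-1) ^ n * (\<Sum>i\<le>n. of_nat (n choose i) * Df i x * Dg (n - i) x)" if "x > 0" for n x
  proof -
    have "(-1) ^ n * (\<Sum>i\<le>n. of_nat (n choose i) * Df i x * Dg (n - i) x)
        = (\<Sum>i\<le>n. of_nat (n choose i) * ((-1) ^ i * Df i x) * ((-1) ^ (n - i) * Dg (n - i) x))"
      unfolding sum_distrib_left
      by (intro sum.cong refl) (simp add: algebra_simps flip: power_add)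
    also have "\<dots> \<ge> 0"
      using sign[OF that] by (intro sum_nonneg mult_nonneg_nonneg[OF mult_nonneg_nonneg]) auto
    finally show ?thesis .
  qed
  then show ?thesis
    unfolding completely_monotonic_on_pos_iff using higher_derivs_on_pos_mult[OF D] by blast
qed

lemma completely_monotonic_on_pos_inverse_power:
  assumes "a \<ge> 0"
  shows "completely_monotonic_on {0<..} (\<lambda>x. (1 / (x + a)) ^ m)"
proof -
  have "0 \<le> (-1) ^ n * ((-1) ^ n * pochhammer (real m) n / (x + a) ^ (m + n))" if "x > 0" for n x
  proof -
    have "0 \<le> pochhammer (real m) n / (x + a) ^ (m + n)"
      using that assms by (simp add: pochhammer_of_nat)
    then show ?thesis by (simp flip: power_mult_distrib)
  qed
  then have "completely_monotonic_on {0<..} (\<lambda>x. 1 / (x + a) ^ m)"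
    unfolding completely_monotonic_on_pos_iff
    using higher_derivs_on_pos_inverse_power[OF assms] by blast
  then show ?thesis
    by (rule completely_monotonic_on_pos_cong) (simp add: power_one_over)
qed

definition derivs_vanish_at_top :: "(real \<Rightarrow> real) \<Rightarrow> bool" where
  "derivs_vanish_at_top f \<longleftrightarrow> (\<exists>D. higher_derivs_on_pos f D \<and> (\<forall>n. (D n \<longlongrightarrow> 0) at_top))"

lemma derivs_vanish_at_top_cong:
  assumes "derivs_vanish_at_top f" "\<And>x. x > 0 \<Longrightarrow> f x = g x"
  shows "derivs_vanish_at_top g"
proof -
  obtain D where "higher_derivs_on_pos f D" "\<forall>n. (D n \<longlongrightarrow> 0) at_top"
    using assms(1) unfolding derivs_vanish_at_top_def by blast
  moreover have "higher_derivs_on_pos g D"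
    using higher_derivs_on_pos_cong[of f D g] assms(2) calculation(1) by blast
  ultimately show ?thesis
    unfolding derivs_vanish_at_top_def by blast
qed

lemma derivs_vanish_at_top_add:
  assumes "derivs_vanish_at_top f" "derivs_vanish_at_top g"
  shows "derivs_vanish_at_top (\<lambda>x. f x + g x)"
proof -
  obtain Df Dg where D: "higher_derivs_on_pos f Df" "higher_derivs_on_pos g Dg"
    and "\<forall>n. (Df n \<longlongrightarrow> 0) at_top" "\<forall>n. (Dg n \<longlongrightarrow> 0) at_top"
    using assms unfolding derivs_vanish_at_top_def by blast
  then show ?thesis
    unfolding derivs_vanish_at_top_def
    by (intro exI[of _ "\<lambda>n x. Df n x + Dg n x"] conjI higher_derivs_on_pos_add[OF D] allI
        tendsto_add_zero) auto
qed

lemma derivs_vanish_at_top_cmult: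
  assumes "derivs_vanish_at_top f"
  shows "derivs_vanish_at_top (\<lambda>x. c * f x)"
proof -
  obtain D where D: "higher_derivs_on_pos f D" and "\<forall>n. (D n \<longlongrightarrow> 0) at_top"
    using assms unfolding derivs_vanish_at_top_def by blast
  then show ?thesis
    unfolding derivs_vanish_at_top_def
    by (intro exI[of _ "\<lambda>n x. c * D n x"] conjI higher_derivs_on_pos_cmult[OF D] allI
        tendsto_mult_right_zero) auto
qed

lemma derivs_vanish_at_top_diff:
  assumes "derivs_vanish_at_top f" "derivs_vanish_at_top g"
  shows "derivs_vanish_at_top (\<lambda>x. f x - g x)"
proof -
  have "derivs_vanish_at_top (\<lambda>x. f x + (-1) * g x)"
    using assms by (intro derivs_vanish_at_top_add derivs_vanish_at_top_cmult)
  then show ?thesis by (rule derivs_vanish_at_top_cong) simp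
qed

lemma derivs_vanish_at_top_mult:
  assumes "derivs_vanish_at_top f" "derivs_vanish_at_top g"
  shows "derivs_vanish_at_top (\<lambda>x. f x * g x)"
proof -
  obtain Df Dg where D: "higher_derivs_on_pos f Df" "higher_derivs_on_pos g Dg"
    and "\<forall>n. (Df n \<longlongrightarrow> 0) at_top" "\<forall>n. (Dg n \<longlongrightarrow> 0) at_top"
    using assms unfolding derivs_vanish_at_top_def by blast
  then show ?thesis
    unfolding derivs_vanish_at_top_def
    by (intro exI[of _ "\<lambda>n x. \<Sum>i\<le>n. of_nat (n choose i) * Df i x * Dg (n - i) x"] conjI
        higher_derivs_on_pos_mult[OF D] allI tendsto_null_sum tendsto_mult_zero
        tendsto_mult_right_zero) auto
qed

lemma derivs_vanish_at_top_inverse_power: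
  assumes "a \<ge> 0" "m \<ge> 1"
  shows "derivs_vanish_at_top (\<lambda>x. (1 / (x + a)) ^ m)"
proof -
  have "((\<lambda>x. (-1) ^ n * pochhammer (real m) n / (x + a) ^ (m + n)) \<longlongrightarrow> 0) at_top" for n
  proof -
    have "filterlim (\<lambda>x::real. x + a) at_top at_top"
      using filterlim_tendsto_add_at_top[OF tendsto_const filterlim_ident, of a]
      by (simp add: add.commute)
    then have "filterlim (\<lambda>x::real. (x + a) ^ (m + n)) at_top at_top"
      using assms(2) by (intro filterlim_pow_at_top) auto
    then show ?thesis
      by (intro tendsto_divide_0[OF tendsto_const] filterlim_at_top_imp_at_infinity)
  qed
  then have "derivs_vanish_at_top (\<lambda>x. 1 / (x + a) ^ m)"
    unfolding derivs_vanish_at_top_def using higher_derivs_on_pos_inverse_power[OF assms(1)] by blast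
  then show ?thesis
    by (rule derivs_vanish_at_top_cong) (simp add: power_one_over)
qed

lemma Polygamma_bound:
  assumes "k \<ge> 1" "y \<ge> (1::real)"
  shows "\<bar>Polygamma k y\<bar> \<le> 2 * fact k / y"
proof -
  \<comment> \<open>Compare the series for the k-th polygamma function termwise with a telescoping series.\<close>
  define S where "S = (-1) ^ Suc k * Polygamma k y / fact k"
  have sums: "(\<lambda>j. inverse ((y + real j) ^ Suc k)) sums S"
    unfolding S_def using assms by (intro Polygamma_LIMSEQ) auto
  have lim: "(\<lambda>j. 2 / (y + real j)) \<longlonglongrightarrow> 0"
    by (intro tendsto_divide_0[OF tendsto_const] filterlim_at_top_imp_at_infinity
        filterlim_tendsto_add_at_top[OF tendsto_const filterlim_real_sequentially])
  have telescope: "(\<lambda>j. 2 / (y + real j) - 2 / (y + real (Suc j))) sums (2 / y)"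
    using telescope_sums'[OF lim] by simp
  have "inverse ((y + real j) ^ Suc k) \<le> 2 / (y + real j) - 2 / (y + real (Suc j))" for j
  proof -
    define t where "t = y + real j"
    have "t \<ge> 1" using assms by (simp add: t_def)
    then have "t \<le> t * t"
      using mult_left_mono[of 1 t t] by simp
    then have "t * (t + 1) \<le> 2 * t ^ 2"
      by (simp add: power2_eq_square algebra_simps)
    have "inverse (t ^ Suc k) \<le> inverse (t ^ 2)"
      using \<open>t \<ge> 1\<close> assms(1) by (intro le_imp_inverse_le power_increasing) auto
    also have "\<dots> = 2 / (2 * t ^ 2)"
      by (simp add: inverse_eq_divide)
    also have "\<dots> \<le> 2 / (t * (t + 1))"
      using \<open>t * (t + 1) \<le> 2 * t ^ 2\<close> by (rule divide_left_mono) (use \<open>t \<ge> 1\<close> in simp_all)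
    also have "\<dots> = 2 / t - 2 / (t + 1)"
      using \<open>t \<ge> 1\<close> by (simp add: field_simps)
    finally show ?thesis by (simp add: t_def add_ac)
  qed
  then have "S \<le> 2 / y"
    using sums_le[OF _ sums telescope] by simp
  moreover have "0 \<le> S"
    using sums_le[OF _ sums_zero sums] assms by simp
  have "\<bar>Polygamma k y\<bar> = fact k * \<bar>S\<bar>"
    by (simp add: S_def abs_mult)
  also have "\<dots> = fact k * S"
    using \<open>0 \<le> S\<close> by simp
  also have "\<dots> \<le> fact k * (2 / y)"
    using \<open>S \<le> 2 / y\<close> by (rule mult_left_mono) simp
  finally show ?thesis
    by (simp add: mult.commute)
qed

lemma Polygamma_tendsto_0_at_top:
  assumes "k \<ge> 1"
  shows "(Polygamma k \<longlongrightarrow> (0::real)) at_top"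
proof (rule Lim_null_comparison)
  show "eventually (\<lambda>y. norm (Polygamma k y) \<le> 2 * fact k / y) at_top"
    using eventually_ge_at_top[of "1::real"] by eventually_elim (simp add: Polygamma_bound[OF assms])
  show "((\<lambda>y::real. 2 * fact k / y) \<longlongrightarrow> 0) at_top"
    by (intro tendsto_divide_0[OF tendsto_const] filterlim_at_top_imp_at_infinity filterlim_ident)
qed

lemma derivs_vanish_at_top_Polygamma: "m \<ge> 1 \<Longrightarrow> derivs_vanish_at_top (Polygamma m)"
  unfolding derivs_vanish_at_top_def
  by (intro exI[of _ "\<lambda>n. Polygamma (m + n)"] conjI higher_derivs_on_pos_Polygamma allI
      Polygamma_tendsto_0_at_top) simp

lemma derivs_vanish_at_top_tendsto_0:
  assumes "derivs_vanish_at_top f"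
  shows "(f \<longlongrightarrow> 0) at_top"
proof -
  obtain D where D: "higher_derivs_on_pos f D" "(D 0 \<longlongrightarrow> 0) at_top"
    using assms unfolding derivs_vanish_at_top_def by blast
  have ev: "eventually (\<lambda>x. D 0 x = f x) at_top"
    using eventually_gt_at_top[of "0::real"]
    by eventually_elim (use D(1) in \<open>simp add: higher_derivs_on_pos_def\<close>)
  show ?thesis
    using tendsto_cong[OF ev] D(2) by simp
qed

lemma nonneg_if_unit_steps_decreasing:
  fixes u :: "real \<Rightarrow> real"
  assumes "\<And>y. y \<ge> x \<Longrightarrow> u (y + 1) \<le> u y" "(u \<longlongrightarrow> 0) at_top"
  shows "0 \<le> u x"
proof -
  have "u (x + real N) \<le> u x" for N
  proof (induction N)
    case (Suc N)
    have "u (x + real (Suc N)) \<le> u (x + real N)"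
      using assms(1)[of "x + real N"] by (simp add: add_ac)
    with Suc.IH show ?case by simp
  qed simp
  moreover have "(\<lambda>N. u (x + real N)) \<longlonglongrightarrow> 0"
    by (rule filterlim_compose[OF assms(2)])
      (rule filterlim_tendsto_add_at_top[OF tendsto_const filterlim_real_sequentially])
  ultimately show ?thesis
    by (intro LIMSEQ_le_const2[of "\<lambda>N. u (x + real N)"]) auto
qed

lemma le_if_unit_steps_le:
  fixes F B :: "real \<Rightarrow> real"
  assumes "\<And>y. y \<ge> x \<Longrightarrow> F y - F (y + 1) \<le> B y - B (y + 1)"
    and "(F \<longlongrightarrow> 0) at_top" "(B \<longlongrightarrow> 0) at_top"
  shows "F x \<le> B x"
proof -
  have "((\<lambda>y. B y - F y) \<longlongrightarrow> 0) at_top"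
    using tendsto_diff[OF assms(3,2)] by simp
  then have "0 \<le> B x - F x"
  proof (rule nonneg_if_unit_steps_decreasing[of x "\<lambda>y. B y - F y", rotated])
    show "B (y + 1) - F (y + 1) \<le> B y - F y" if "x \<le> y" for y
      using assms(1)[OF that] by simp
  qed
  then show ?thesis by simp
qed

lemma completely_monotonic_on_pos_telescope:
  assumes "derivs_vanish_at_top F" "completely_monotonic_on {0<..} G"
    and "\<And>x. x > 0 \<Longrightarrow> F x = G x + F (x + 1)"
  shows "completely_monotonic_on {0<..} F"
proof -
  obtain DF where DF: "higher_derivs_on_pos F DF" "\<And>n. (DF n \<longlongrightarrow> 0) at_top"
    using assms(1) unfolding derivs_vanish_at_top_def by blast
  obtain DG where DG: "higher_derivs_on_pos G DG" "\<And>n x. x > 0 \<Longrightarrow> 0 \<le> (-1) ^ n * DG n x"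
    using assms(2) unfolding completely_monotonic_on_pos_iff by blast
  have "higher_derivs_on_pos F (\<lambda>n x. DG n x + DF n (x + 1))"
    using higher_derivs_on_pos_add[OF DG(1) higher_derivs_on_pos_shift[OF DF(1)]]
    by (rule higher_derivs_on_pos_cong) (simp add: assms(3)[symmetric])
  then have rec: "DF n y = DG n y + DF n (y + 1)" if "y > 0" for n y
    using higher_derivs_on_pos_unique[OF DF(1) _ that] by simp
  have "0 \<le> (-1) ^ n * DF n x" if "x > 0" for n x
  proof (rule nonneg_if_unit_steps_decreasing[where u = "\<lambda>y. (-1) ^ n * DF n y"])
    show "(-1) ^ n * DF n (y + 1) \<le> (-1) ^ n * DF n y" if "y \<ge> x" for y
      using rec[of y n] DG(2)[of y n] that \<open>x > 0\<close> by (simp add: distrib_left)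
    show "((\<lambda>y. (-1) ^ n * DF n y) \<longlongrightarrow> 0) at_top"
      using DF(2) by (intro tendsto_mult_right_zero)
  qed
  then show ?thesis
    unfolding completely_monotonic_on_pos_iff using DF(1) by blast
qed

lemma mult_powers_le_power:
  fixes a b c :: real
  assumes "0 \<le> b" "b \<le> a" "0 \<le> c" "c \<le> a"
  shows "b ^ i * c ^ j \<le> a ^ (i + j)"
proof -
  have "b ^ i * c ^ j \<le> a ^ i * a ^ j"
    using assms by (intro mult_mono power_mono) auto
  then show ?thesis by (simp add: power_add)
qed

lemma mult_powers_le_power3:
  fixes a b c d :: real
  assumes "0 \<le> b" "b \<le> a" "0 \<le> c" "c \<le> a" "0 \<le> d" "d \<le> a"
  shows "b ^ i * c ^ j * d ^ k \<le> a ^ (i + j + k)"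
proof -
  have "b ^ i * c ^ j * d ^ k \<le> a ^ (i + j) * a ^ k"
    using assms mult_powers_le_power[of b a c i j] by (intro mult_mono power_mono) auto
  then show ?thesis by (simp add: power_add)
qed

lemma pochhammer_le_fact_mult_power:
  fixes x :: real
  assumes "x \<ge> 1"
  shows "pochhammer x k \<le> fact k * x ^ k"
proof (induction k)
  case (Suc k)
  have "x + real k \<le> real (Suc k) * x"
    using assms mult_left_mono[of 1 x "real k"] by (simp add: algebra_simps)
  then have "pochhammer x k * (x + real k) \<le> (fact k * x ^ k) * (real (Suc k) * x)"
    using Suc.IH assms by (intro mult_mono) (auto intro: pochhammer_nonneg)
  then show ?case
    by (simp add: pochhammer_Suc algebra_simps)
qed simp

lemma inverse_pochhammer_diff:
  fixes x :: real
  assumes "x > 0"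
  shows "1 / pochhammer x k - 1 / pochhammer (x + 1) k = real k / pochhammer x (Suc k)"
proof -
  have "pochhammer x k > 0" "pochhammer (x + 1) k > 0"
    using assms by (simp_all add: pochhammer_pos)
  moreover have "1 / pochhammer x k = (x + real k) / pochhammer x (Suc k)"
    unfolding pochhammer_rec' using assms calculation by simp
  moreover have "1 / pochhammer (x + 1) k = x / pochhammer x (Suc k)"
    unfolding pochhammer_rec using assms calculation by simp
  ultimately show ?thesis
    by (simp add: diff_divide_distrib[symmetric])
qed

lemma pochhammer_6_ge:
  fixes x :: real
  assumes "x \<ge> 0"
  shows "x ^ 4 * (x + 1) ^ 2 \<le> pochhammer x 6"
proof -
  have "x * x * x * x * (x + 1) * (x + 1) \<le> x * (x + 2) * (x + 3) * (x + 4) * (x + 1) * (x + 5)"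
    using assms by (intro mult_mono) auto
  then show ?thesis
    by (simp add: pochhammer_Suc eval_nat_numeral algebra_simps)
qed

lemma derivs_vanish_at_top_inverse_pochhammer:
  assumes "k \<ge> 1"
  shows "derivs_vanish_at_top (\<lambda>x. 1 / pochhammer x k)"
  using assms
proof (induction k rule: nat_induct_at_least)
  case base
  show ?case
    using derivs_vanish_at_top_inverse_power[of 0 1] by simp
next
  case (Suc k)
  have "derivs_vanish_at_top (\<lambda>x. 1 / pochhammer x k * (1 / (x + real k)) ^ 1)"
    by (intro derivs_vanish_at_top_mult Suc derivs_vanish_at_top_inverse_power) simp_all
  then show ?case
    by (rule derivs_vanish_at_top_cong) (simp add: pochhammer_Suc)
qed

text \<open>A rational approximation of the trigamma function, chosen so that the difference
  trigamma_err x - trigamma_err (x + 1) (computed in trigamma_err_rec) has only nonnegative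
  coefficients.\<close>

definition trigamma_rat :: "real \<Rightarrow> real" where
  "trigamma_rat x = 1/6 * (1/x) + (1/x)^2 + 17/3 * (1/(x+1)) - 3 * (1/(x+1))^2
     + 11/6 * (1/(x+1))^3 - 1/2 * (1/(x+1))^4 - 29/6 * (1/(x+2)) - 3/2 * (1/(x+2))^2"

definition trigamma_err :: "real \<Rightarrow> real" where
  "trigamma_err x = trigamma_rat x - Polygamma 1 x"

definition trigamma_err_step :: "real \<Rightarrow> real" where
  "trigamma_err_step x =
     11/60 * ((1/x) * (1/(x+1))^4 * (1/(x+2))) + 53/60 * ((1/(x+1))^4 * (1/(x+2))^2)
     + 29/15 * ((1/(x+1))^2 * (1/(x+2))^4) + 3/2 * ((1/(x+2))^4 * (1/(x+3))^2)
     + 7/3 * ((1/(x+1)) * (1/(x+2))^4 * (1/(x+3))) + 6/5 * ((1/x) * (1/(x+1))^4 * (1/(x+2))^4)"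

text \<open>The partial fraction expansion of (x^2 + 4x + 12) / (12 x^4 (x+1)^2), so that
  minus_f4 is - f_lam 4 (see minus_f_lam_eq).\<close>

definition minus_f4_rat :: "real \<Rightarrow> real" where
  "minus_f4_rat x = 1/12 * (- 38 * (1/x) + 29 * (1/x)^2 - 20 * (1/x)^3 + 12 * (1/x)^4
     + 38 * (1/(x+1)) + 9 * (1/(x+1))^2)"

definition minus_f4 :: "real \<Rightarrow> real" where
  "minus_f4 x = minus_f4_rat x - (Polygamma 1 x)\<^sup>2 - Polygamma 2 x"

text \<open>After the shift rules for \<psi>' and \<psi>'', both recurrences are polynomial identities in
  the reciprocals a_i = 1/(x+i) modulo the relations (x+i) a_i = 1.\<close>

lemma trigamma_err_rec:
  assumes "x > 0"
  shows "trigamma_err x = trigamma_err_step x + trigamma_err (x + 1)"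
proof -
  define a0 a1 a2 a3 where "a0 = 1/x" "a1 = 1/(x+1)" "a2 = 1/(x+2)" "a3 = 1/(x+3)"
  have inv: "x * a0 = 1" "(x+1) * a1 = 1" "(x+2) * a2 = 1" "(x+3) * a3 = 1"
    using assms by (auto simp: a0_a1_a2_a3_def)
  have recip: "1/x = a0" "1/(x+1) = a1" "1/(x+1+1) = a2" "1/(x+2) = a2" "1/(x+1+2) = a3"
    "1/(x+3) = a3"
    by (auto simp: a0_a1_a2_a3_def add.assoc)
  have "Polygamma 1 (x + 1) = Polygamma 1 x - a0^2"
    using assms by (simp add: Polygamma_plus1 a0_a1_a2_a3_def power_one_over power2_eq_square)
  then show ?thesis
    unfolding trigamma_err_def trigamma_rat_def trigamma_err_step_def recip using inv by algebra
qed

lemma minus_f4_rec: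
  assumes "x > 0"
  shows "minus_f4 x = 2 * (1/x)^2 * trigamma_err x + minus_f4 (x + 1)"
proof -
  define a0 a1 a2 where "a0 = 1/x" "a1 = 1/(x+1)" "a2 = 1/(x+2)"
  have inv: "x * a0 = 1" "(x+1) * a1 = 1" "(x+2) * a2 = 1"
    using assms by (auto simp: a0_a1_a2_def)
  have recip: "1/x = a0" "1/(x+1) = a1" "1/(x+1+1) = a2" "1/(x+2) = a2"
    by (auto simp: a0_a1_a2_def add.assoc)
  have "Polygamma 1 (x + 1) = Polygamma 1 x - a0^2" "Polygamma 2 (x + 1) = Polygamma 2 x + 2 * a0^3"
    using assms by (simp_all add: Polygamma_plus1 a0_a1_a2_def power_one_over power2_eq_square power3_eq_cube)
  then show ?thesis
    unfolding minus_f4_def minus_f4_rat_def trigamma_err_def trigamma_rat_def recip using inv by algebra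
qed

lemma minus_f_lam_eq:
  assumes "x > 0"
  shows "- f_lam lam x = minus_f4 x + (lam - 4) / 12 * ((1/x)^3 * (1/(x+1))^2)"
proof -
  define a0 a1 where "a0 = 1/x" "a1 = 1/(x+1)"
  have inv: "x * a0 = 1" "(x+1) * a1 = 1"
    using assms by (auto simp: a0_a1_def)
  have "(x\<^sup>2 + lam * x + 12) / (12 * x ^ 4 * (x + 1)\<^sup>2) = (x\<^sup>2 + lam * x + 12) / 12 * a0^4 * a1^2"
    using assms by (simp add: a0_a1_def field_simps)
  moreover have "1/x = a0" "1/(x+1) = a1"
    by (simp_all add: a0_a1_def)
  ultimately show ?thesis
    unfolding f_lam_def minus_f4_def minus_f4_rat_def using inv by algebra
qed

lemma completely_monotonic_on_pos_trigamma_err_step: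
  "completely_monotonic_on {0<..} trigamma_err_step"
  unfolding trigamma_err_step_def
  by (intro completely_monotonic_on_pos_add completely_monotonic_on_pos_cmult
      completely_monotonic_on_pos_mult completely_monotonic_on_pos_inverse_power
      completely_monotonic_on_pos_inverse_power[of 0 1, simplified]
      completely_monotonic_on_pos_inverse_power[of _ 1, simplified]) auto

lemma derivs_vanish_at_top_trigamma_err: "derivs_vanish_at_top trigamma_err"
  unfolding trigamma_err_def[abs_def] trigamma_rat_def
  by (intro derivs_vanish_at_top_add derivs_vanish_at_top_diff derivs_vanish_at_top_cmult
      derivs_vanish_at_top_inverse_power derivs_vanish_at_top_inverse_power[of _ 1, simplified]
      derivs_vanish_at_top_inverse_power[of 0 1, simplified]
      derivs_vanish_at_top_inverse_power[of 0, simplified] derivs_vanish_at_top_Polygamma) auto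

lemma completely_monotonic_on_pos_trigamma_err: "completely_monotonic_on {0<..} trigamma_err"
  using derivs_vanish_at_top_trigamma_err completely_monotonic_on_pos_trigamma_err_step trigamma_err_rec
  by (rule completely_monotonic_on_pos_telescope)

lemma derivs_vanish_at_top_minus_f4: "derivs_vanish_at_top minus_f4"
  unfolding minus_f4_def[abs_def] minus_f4_rat_def power2_eq_square[of "Polygamma 1 _"]
  by (intro derivs_vanish_at_top_add derivs_vanish_at_top_diff derivs_vanish_at_top_cmult
      derivs_vanish_at_top_mult
      derivs_vanish_at_top_inverse_power derivs_vanish_at_top_inverse_power[of _ 1, simplified]
      derivs_vanish_at_top_inverse_power[of 0 1, simplified]
      derivs_vanish_at_top_inverse_power[of 0, simplified] derivs_vanish_at_top_Polygamma) auto

lemma completely_monotonic_on_pos_minus_f4: "completely_monotonic_on {0<..} minus_f4"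
proof (rule completely_monotonic_on_pos_telescope[OF derivs_vanish_at_top_minus_f4 _ minus_f4_rec])
  show "completely_monotonic_on {0<..} (\<lambda>x. 2 * (1/x)^2 * trigamma_err x)"
    by (intro completely_monotonic_on_pos_mult completely_monotonic_on_pos_cmult
        completely_monotonic_on_pos_trigamma_err completely_monotonic_on_pos_inverse_power[of 0, simplified])
      auto
qed

lemma trigamma_err_step_le:
  assumes "x \<ge> 1"
  shows "trigamma_err_step x \<le> 9 * (1/x) ^ 6"
proof -
  have r: "0 \<le> 1/(x+a)" "1/(x+a) \<le> 1/x" if "a \<ge> 0" for a :: real
    using assms that by (auto simp: frac_le)
  have r0: "0 \<le> 1/x" "1/x \<le> 1/x"
    using assms by simp_all
  have "(1/x)^9 \<le> (1/x)^6"
    using assms by (intro power_decreasing) auto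
  moreover have
    "(1/x)^1 * (1/(x+1))^4 * (1/(x+2))^1 \<le> (1/x)^6"
    "(1/(x+1))^4 * (1/(x+2))^2 \<le> (1/x)^6"
    "(1/(x+1))^2 * (1/(x+2))^4 \<le> (1/x)^6"
    "(1/(x+2))^4 * (1/(x+3))^2 \<le> (1/x)^6"
    "(1/(x+1))^1 * (1/(x+2))^4 * (1/(x+3))^1 \<le> (1/x)^6"
    "(1/x)^1 * (1/(x+1))^4 * (1/(x+2))^4 \<le> (1/x)^9"
    using mult_powers_le_power3[OF r0 r[of 1] r[of 2], of 1 4 1]
      mult_powers_le_power[OF r[of 1] r[of 2], of 4 2] mult_powers_le_power[OF r[of 1] r[of 2], of 2 4]
      mult_powers_le_power[OF r[of 2] r[of 3], of 4 2]
      mult_powers_le_power3[OF r[of 1] r[of 2] r[of 3], of 1 4 1]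
      mult_powers_le_power3[OF r0 r[of 1] r[of 2], of 1 4 4]
    by simp_all
  ultimately have "trigamma_err_step x \<le> (11/60 + 53/60 + 29/15 + 3/2 + 7/3 + 6/5) * (1/x)^6"
    unfolding trigamma_err_step_def distrib_right by (intro add_mono mult_left_mono) auto
  also have "\<dots> \<le> 9 * (1/x) ^ 6"
    using r0 by (intro mult_right_mono) auto
  finally show ?thesis .
qed

lemma trigamma_err_le:
  assumes "x \<ge> 1"
  shows "trigamma_err x \<le> 1296 / pochhammer x 5"
proof (rule le_if_unit_steps_le[where B = "\<lambda>x::real. 1296 / pochhammer x 5"])
  fix y :: real assume "x \<le> y"
  then have "y \<ge> 1" using assms by simp
  have "pochhammer y 6 \<le> 720 * y ^ 6"
    using pochhammer_le_fact_mult_power[OF \<open>y \<ge> 1\<close>, of 6] by (simp add: fact_numeral)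
  have "trigamma_err y - trigamma_err (y + 1) = trigamma_err_step y"
    using trigamma_err_rec[of y] \<open>y \<ge> 1\<close> by simp
  also have "\<dots> \<le> 9 * (1/y) ^ 6"
    using trigamma_err_step_le[OF \<open>y \<ge> 1\<close>] .
  also have "\<dots> = 6480 / (720 * y ^ 6)"
    by (simp add: power_one_over)
  also have "\<dots> \<le> 6480 / pochhammer y 6"
    using \<open>pochhammer y 6 \<le> 720 * y ^ 6\<close> \<open>y \<ge> 1\<close>
    by (intro divide_left_mono) (auto intro!: mult_pos_pos pochhammer_pos)
  also have "\<dots> = 1296 / pochhammer y 5 - 1296 / pochhammer (y + 1) 5"
    using inverse_pochhammer_diff[of y 5] \<open>y \<ge> 1\<close> by (simp add: eval_nat_numeral field_simps)
  finally show "trigamma_err y - trigamma_err (y + 1)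
      \<le> 1296 / pochhammer y 5 - 1296 / pochhammer (y + 1) 5" .
next
  show "(trigamma_err \<longlongrightarrow> 0) at_top"
    by (rule derivs_vanish_at_top_tendsto_0[OF derivs_vanish_at_top_trigamma_err])
  show "((\<lambda>x::real. 1296 / pochhammer x 5) \<longlongrightarrow> 0) at_top"
    using derivs_vanish_at_top_tendsto_0[OF derivs_vanish_at_top_cmult[OF
        derivs_vanish_at_top_inverse_pochhammer[of 5]], of 1296] by simp
qed

lemma minus_f4_le:
  assumes "x \<ge> 1"
  shows "minus_f4 x \<le> 18144 / pochhammer x 6"
proof (rule le_if_unit_steps_le[where B = "\<lambda>x::real. 18144 / pochhammer x 6"])
  fix y :: real assume "x \<le> y"
  then have "y \<ge> 1" using assms by simp
  have "(y + 6) * (y + 5) \<le> 42 * y^2"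
    using \<open>y \<ge> 1\<close> mult_mono[of "y + 5" "6 * y" "y + 6" "7 * y"]
    by (simp add: power2_eq_square algebra_simps)
  have p5: "pochhammer y 5 > 0"
    using \<open>y \<ge> 1\<close> by (simp add: pochhammer_pos)
  have "minus_f4 y - minus_f4 (y + 1) = 2 * (1/y)^2 * trigamma_err y"
    using minus_f4_rec[of y] \<open>y \<ge> 1\<close> by simp
  also have "\<dots> \<le> 2 * (1/y)^2 * (1296 / pochhammer y 5)"
    using trigamma_err_le[OF \<open>y \<ge> 1\<close>] by (intro mult_left_mono) auto
  also have "\<dots> = 2592 / (y^2 * pochhammer y 5)"
    by (simp add: power_one_over)
  also have "\<dots> \<le> 108864 / ((y + 5) * (y + 6) * pochhammer y 5)"
    using \<open>(y + 6) * (y + 5) \<le> 42 * y^2\<close> p5 \<open>y \<ge> 1\<close>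
    by (simp add: divide_simps mult_right_mono)
  also have "\<dots> = 108864 / pochhammer y 7"
    by (simp add: pochhammer_Suc eval_nat_numeral algebra_simps)
  also have "\<dots> = 18144 / pochhammer y 6 - 18144 / pochhammer (y + 1) 6"
    using inverse_pochhammer_diff[of y 6] \<open>y \<ge> 1\<close> by (simp add: eval_nat_numeral field_simps)
  finally show "minus_f4 y - minus_f4 (y + 1) \<le> 18144 / pochhammer y 6 - 18144 / pochhammer (y + 1) 6" .
next
  show "(minus_f4 \<longlongrightarrow> 0) at_top"
    by (rule derivs_vanish_at_top_tendsto_0[OF derivs_vanish_at_top_minus_f4])
  show "((\<lambda>x::real. 18144 / pochhammer x 6) \<longlongrightarrow> 0) at_top"
    using derivs_vanish_at_top_tendsto_0[OF derivs_vanish_at_top_cmult[OF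
        derivs_vanish_at_top_inverse_pochhammer[of 6]], of 18144] by simp
qed

lemma minus_f4_le_power:
  assumes "x \<ge> 1"
  shows "minus_f4 x \<le> 18144 / x * ((1/x)^3 * (1/(x+1))^2)"
proof -
  have "1 / pochhammer x 6 \<le> 1 / (x ^ 4 * (x + 1) ^ 2)"
    using pochhammer_6_ge[of x] assms
    by (intro divide_left_mono) (auto intro!: mult_pos_pos pochhammer_pos)
  also have "\<dots> = 1 / x * ((1/x)^3 * (1/(x+1))^2)"
    by (simp add: power_one_over eval_nat_numeral)
  finally show ?thesis
    using minus_f4_le[OF assms] by simp
qed

lemma minus_f_lam_negative:
  assumes "lam < 4"
  obtains x where "x > 0" "- f_lam lam x < 0"
proof -
  define c where "c = (4 - lam) / 12"
  define x where "x = 18144 / c + 1"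
  define A where "A = (1/x)^3 * (1/(x+1))^2"
  have "c > 0" "x \<ge> 1"
    using assms by (simp_all add: c_def x_def)
  have "A > 0"
    using \<open>x \<ge> 1\<close> by (simp add: A_def)
  have "18144 / x < c"
    using \<open>c > 0\<close> by (simp add: x_def field_simps)
  have "- f_lam lam x = minus_f4 x + (lam - 4) / 12 * A"
    using minus_f_lam_eq[of x lam] \<open>x \<ge> 1\<close> by (simp only: A_def)
  also have "\<dots> = minus_f4 x - c * A"
    by (simp add: c_def field_simps)
  also have "\<dots> \<le> 18144 / x * A - c * A"
    using minus_f4_le_power[OF \<open>x \<ge> 1\<close>] by (simp add: A_def)
  also have "\<dots> = (18144 / x - c) * A"
    by (simp add: algebra_simps)
  also have "\<dots> < 0"
    using \<open>18144 / x < c\<close> \<open>A > 0\<close> by (simp add: mult_neg_pos)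
  finally have "- f_lam lam x < 0" .
  then show ?thesis
    using \<open>x \<ge> 1\<close> by (intro that[of x]) simp_all
qed

theorem theorem1p1:
  fixes lam :: real
  shows "completely_monotonic_on {0<..} (\<lambda>x. - f_lam lam x) \<longleftrightarrow> lam \<ge> 4"
proof
  assume "lam \<ge> 4"
  then have "completely_monotonic_on {0<..}
      (\<lambda>x. minus_f4 x + (lam - 4) / 12 * ((1/x)^3 * (1/(x+1))^2))"
    by (intro completely_monotonic_on_pos_add completely_monotonic_on_pos_minus_f4
        completely_monotonic_on_pos_cmult completely_monotonic_on_pos_mult
        completely_monotonic_on_pos_inverse_power[of 0, simplified]
        completely_monotonic_on_pos_inverse_power) auto
  then show "completely_monotonic_on {0<..} (\<lambda>x. - f_lam lam x)"
    by (rule completely_monotonic_on_pos_cong) (simp add: minus_f_lam_eq)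
next
  assume cm: "completely_monotonic_on {0<..} (\<lambda>x. - f_lam lam x)"
  show "lam \<ge> 4"
  proof (rule ccontr)
    assume "\<not> lam \<ge> 4"
    then have "lam < 4"
      by simp
    then obtain x where "x > 0" "- f_lam lam x < 0"
      by (rule minus_f_lam_negative)
    with completely_monotonic_on_nonneg[OF cm, of x] show False
      by simp
  qed
qed

end
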